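(* Let $G$ be a countable discrete group and $S=S^{-1}\subset G$ a finite symmetric generating set. Then $\mathrm{Ind}(\mathcal X_S:\mathbb C1)\le 1+\rho(S)$.
   Context: $C^*_\lambda(G)$ is the reduced group C$^*$-algebra with left regular representation $\lambda$, and $\mathcal X_S=\mathrm{span}\{\lambda(s):s\in S\cup\{e\}\}\subset C^*_\lambda(G)$ (an operator system). $E:C^*_\lambda(G)\to\mathbb C1$ is the canonical conditional expectation $E(x)=\tau(x)1$ with $\tau$ the canonical trace. For self-adjoint $x\in\mathcal X_S\setminus\{0\}$ with $E(x)=0$, let $a,b>0$ be the smallest constants with $a1-x\ge0$ and $b1+x\ge0$, and set $\rho(x)=\max\{a/b,b/a\}$; $\rho(S)=\sup\{\rho(x):x=x^*\in\mathcal X_S\setminus\{0\},\ E(x)=0\}$. For an operator system $\mathcal X$ with unit $1$ and subsystem $\mathcal X_0$, $\mathrm{Ind}(\mathcal X:\mathcal X_0)=\inf\{\|\phi(1)\|:\phi\in\mathrm{CP}_1(\mathcal X),\ \phi(\mathcal X)\subset\mathcal X_0,\ \phi-\mathrm{id}_{\mathcal X}\text{ positive}\}$ ($\infty$ if empty), where $\mathrm{CP}_1(\mathcal X)$ is the set of completely positive $\phi:\mathcal X\to\mathcal X$ with $\phi(\mathbb C1)\subset\mathbb C1$ and "positive" means mapping positive elements to positive elements (not necessarily completely). *)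

theory Defs
  imports "HOL-Algebra.Generated_Groups" "HOL-Analysis.Infinite_Sum" "HOL-Library.Extended_Real"
begin

text \<open>Model: elements of the group algebra (finitely supported functions on carrier G),
acting on l2(G) by the left regular representation lambda. Everything below
is relative to the concrete faithful representation of C*_lambda(G) on l2(G).\<close>

definition nonneg_c :: "complex \<Rightarrow> bool" where
  "nonneg_c z \<longleftrightarrow> Im z = 0 \<and> Re z \<ge> 0"

definition l2 :: "('a, 'b) monoid_scheme \<Rightarrow> ('a \<Rightarrow> complex) set" where
  "l2 G = {\<xi>. (\<forall>g. g \<notin> carrier G \<longrightarrow> \<xi> g = 0) \<and>
              (\<lambda>g. (cmod (\<xi> g))^2) summable_on carrier G}"

definition l2_inner :: "('a, 'b) monoid_scheme \<Rightarrow> ('a \<Rightarrow> complex) \<Rightarrow> ('a \<Rightarrow> complex) \<Rightarrow> complex" where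
  "l2_inner G \<xi> \<eta> = infsum (\<lambda>g. \<xi> g * cnj (\<eta> g)) (carrier G)"

definition l2_norm :: "('a, 'b) monoid_scheme \<Rightarrow> ('a \<Rightarrow> complex) \<Rightarrow> real" where
  "l2_norm G \<xi> = sqrt (infsum (\<lambda>g. (cmod (\<xi> g))^2) (carrier G))"

definition fin_supp :: "('a, 'b) monoid_scheme \<Rightarrow> ('a \<Rightarrow> complex) \<Rightarrow> bool" where
  "fin_supp G f \<longleftrightarrow> finite {g. f g \<noteq> 0} \<and> (\<forall>g. g \<notin> carrier G \<longrightarrow> f g = 0)"

text \<open>Action of lambda(f) = sum_h f(h) lambda(h) on xi: (lambda(h) xi)(g) = xi(h^-1 g).\<close>
definition lreg :: "('a, 'b) monoid_scheme \<Rightarrow> ('a \<Rightarrow> complex) \<Rightarrow> ('a \<Rightarrow> complex) \<Rightarrow> ('a \<Rightarrow> complex)" where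
  "lreg G f \<xi> = (\<lambda>g. if g \<in> carrier G
       then (\<Sum>h\<in>{h\<in>carrier G. f h \<noteq> 0}. f h * \<xi> (inv\<^bsub>G\<^esub> h \<otimes>\<^bsub>G\<^esub> g)) else 0)"

definition op_norm :: "('a, 'b) monoid_scheme \<Rightarrow> ('a \<Rightarrow> complex) \<Rightarrow> real" where
  "op_norm G f = Sup {l2_norm G (lreg G f \<xi>) | \<xi>. \<xi> \<in> l2 G \<and> l2_norm G \<xi> \<le> 1}"

definition pos_elem :: "('a, 'b) monoid_scheme \<Rightarrow> ('a \<Rightarrow> complex) \<Rightarrow> bool" where
  "pos_elem G f \<longleftrightarrow> (\<forall>\<xi>\<in>l2 G. nonneg_c (l2_inner G (lreg G f \<xi>) \<xi>))"

definition pos_mat :: "('a, 'b) monoid_scheme \<Rightarrow> nat \<Rightarrow> (nat \<Rightarrow> nat \<Rightarrow> 'a \<Rightarrow> complex) \<Rightarrow> bool" where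
  "pos_mat G n F \<longleftrightarrow> (\<forall>\<xi> :: nat \<Rightarrow> 'a \<Rightarrow> complex. (\<forall>i<n. \<xi> i \<in> l2 G) \<longrightarrow>
      nonneg_c (\<Sum>i<n. \<Sum>j<n. l2_inner G (lreg G (F i j) (\<xi> j)) (\<xi> i)))"

definition unit_el :: "('a, 'b) monoid_scheme \<Rightarrow> ('a \<Rightarrow> complex)" where
  "unit_el G = (\<lambda>g. if g = \<one>\<^bsub>G\<^esub> then 1 else 0)"

definition scalars :: "('a, 'b) monoid_scheme \<Rightarrow> ('a \<Rightarrow> complex) set" where
  "scalars G = {(\<lambda>g. c * unit_el G g) | c. True}"

definition cp_map :: "('a, 'b) monoid_scheme \<Rightarrow> ('a \<Rightarrow> complex) set
     \<Rightarrow> (('a \<Rightarrow> complex) \<Rightarrow> ('a \<Rightarrow> complex)) \<Rightarrow> bool" where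
  "cp_map G X \<phi> \<longleftrightarrow> \<phi> ` X \<subseteq> X \<and>
     (\<forall>x\<in>X. \<forall>y\<in>X. \<forall>c::complex. \<phi> (\<lambda>g. c * x g + y g) = (\<lambda>g. c * \<phi> x g + \<phi> y g)) \<and>
     (\<forall>n F. (\<forall>i<n. \<forall>j<n. F i j \<in> X) \<longrightarrow> pos_mat G n F \<longrightarrow> pos_mat G n (\<lambda>i j. \<phi> (F i j)))"

definition CP1 :: "('a, 'b) monoid_scheme \<Rightarrow> ('a \<Rightarrow> complex) set
     \<Rightarrow> (('a \<Rightarrow> complex) \<Rightarrow> ('a \<Rightarrow> complex)) set" where
  "CP1 G X = {\<phi>. cp_map G X \<phi> \<and> \<phi> ` scalars G \<subseteq> scalars G}"

definition Ind :: "('a, 'b) monoid_scheme \<Rightarrow> ('a \<Rightarrow> complex) set \<Rightarrow> ('a \<Rightarrow> complex) set \<Rightarrow> ereal" where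
  "Ind G X X0 = Inf {ereal (op_norm G (\<phi> (unit_el G))) | \<phi>.
      \<phi> \<in> CP1 G X \<and> \<phi> ` X \<subseteq> X0 \<and>
      (\<forall>x\<in>X. pos_elem G x \<longrightarrow> pos_elem G (\<lambda>g. \<phi> x g - x g))}"

text \<open>X_S = span {lambda(s) : s in S union {e}}.\<close>
definition XS :: "('a, 'b) monoid_scheme \<Rightarrow> 'a set \<Rightarrow> ('a \<Rightarrow> complex) set" where
  "XS G S = {f. fin_supp G f \<and> (\<forall>g. f g \<noteq> 0 \<longrightarrow> g \<in> S \<union> {\<one>\<^bsub>G\<^esub>})}"

definition self_adj :: "('a, 'b) monoid_scheme \<Rightarrow> ('a \<Rightarrow> complex) \<Rightarrow> bool" where
  "self_adj G f \<longleftrightarrow> (\<forall>g\<in>carrier G. f (inv\<^bsub>G\<^esub> g) = cnj (f g))"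

definition upper_const :: "('a, 'b) monoid_scheme \<Rightarrow> ('a \<Rightarrow> complex) \<Rightarrow> real" where
  "upper_const G f = Inf {t::real. pos_elem G (\<lambda>g. of_real t * unit_el G g - f g)}"

definition lower_const :: "('a, 'b) monoid_scheme \<Rightarrow> ('a \<Rightarrow> complex) \<Rightarrow> real" where
  "lower_const G f = Inf {t::real. pos_elem G (\<lambda>g. of_real t * unit_el G g + f g)}"

definition rho_el :: "('a, 'b) monoid_scheme \<Rightarrow> ('a \<Rightarrow> complex) \<Rightarrow> real" where
  "rho_el G f = max (upper_const G f / lower_const G f) (lower_const G f / upper_const G f)"

text \<open>rho(S) as a supremum in the extended reals (sup of the empty set taken as 0).\<close>
definition rho_S :: "('a, 'b) monoid_scheme \<Rightarrow> 'a set \<Rightarrow> ereal" where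
  "rho_S G S = Sup ({ereal (rho_el G f) | f. f \<in> XS G S \<and> self_adj G f \<and>
                       (\<exists>g. f g \<noteq> 0) \<and> f \<one>\<^bsub>G\<^esub> = 0} \<union> {0})"

end

theory Submission
  imports Defs "HOL-Analysis.Elementary_Metric_Spaces"
begin

text \<open>The map \<open>\<phi>(x) = (1 + \<rho>(S)) \<tau>(x) 1\<close> witnesses the bound: it is completely positive
  because \<open>\<tau>\<close> is a state, and \<open>\<parallel>\<phi>(1)\<parallel> \<le> 1 + \<rho>(S)\<close>. For positive \<open>x \<in> X\<^sub>S\<close> with
  \<open>t = \<tau>(x) \<ge> 0\<close>, the trace-free part \<open>x\<^sub>0 = x - t1\<close> is self-adjoint, and its optimal constants
  \<open>a, b\<close> are attained since the positivity conditions defining them are closed in the scalar.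
  Positivity of \<open>t1 + x\<^sub>0 = x\<close> gives \<open>b \<le> t\<close>, and \<open>b > 0\<close> because a positive trace-free element
  vanishes (test it against \<open>\<delta>\<^sub>e + c\<delta>\<^sub>k\<close>). Hence \<open>a \<le> \<rho>(S) b \<le> \<rho>(S) t\<close>, and
  \<open>\<phi>(x) - x = (\<rho>(S) t - a)1 + (a1 - x\<^sub>0) \<ge> 0\<close>.\<close>

lemma has_sum_sum:
  fixes f :: "'i \<Rightarrow> 'a \<Rightarrow> 'b::topological_comm_monoid_add"
  assumes "finite I" "\<And>i. i \<in> I \<Longrightarrow> (f i has_sum s i) A"
  shows "((\<lambda>x. \<Sum>i\<in>I. f i x) has_sum (\<Sum>i\<in>I. s i)) A"
  using assms by (induction I rule: finite_induct) (auto intro: has_sum_add)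

lemma summable_on_sum:
  fixes f :: "'i \<Rightarrow> 'a \<Rightarrow> 'b::topological_comm_monoid_add"
  assumes "finite I" "\<And>i. i \<in> I \<Longrightarrow> f i summable_on A"
  shows "(\<lambda>x. \<Sum>i\<in>I. f i x) summable_on A"
proof -
  obtain s where "\<And>i. i \<in> I \<Longrightarrow> (f i has_sum s i) A"
    using assms(2) unfolding summable_on_def by metis
  then have "((\<lambda>x. \<Sum>i\<in>I. f i x) has_sum (\<Sum>i\<in>I. s i)) A"
    by (rule has_sum_sum[OF assms(1)])
  then show ?thesis by (rule has_sum_imp_summable)
qed

lemma infsum_sum:
  fixes f :: "'i \<Rightarrow> 'a \<Rightarrow> 'b::{topological_comm_monoid_add, t2_space}"
  assumes "finite I" "\<And>i. i \<in> I \<Longrightarrow> f i summable_on A"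
  shows "infsum (\<lambda>x. \<Sum>i\<in>I. f i x) A = (\<Sum>i\<in>I. infsum (f i) A)"
  using has_sum_sum[OF assms(1), where f = f and s = "\<lambda>i. infsum (f i) A"] assms(2) by (simp add: infsumI)

lemma norm_mult_cnj_le_sum_squares:
  fixes a b :: complex
  shows "norm (a * cnj b) \<le> (cmod a)\<^sup>2 + (cmod b)\<^sup>2"
proof -
  have "2 * (cmod a * cmod b) \<le> (cmod a)\<^sup>2 + (cmod b)\<^sup>2"
    using sum_squares_bound[of "cmod a" "cmod b"] by (simp add: mult.assoc)
  moreover have "0 \<le> cmod a * cmod b" by simp
  moreover have "norm (a * cnj b) = cmod a * cmod b" by (simp add: norm_mult)
  ultimately show ?thesis by linarith
qed

lemma abs_summable_on_mult_cnj:
  fixes a b :: "'a \<Rightarrow> complex"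
  assumes "(\<lambda>g. (cmod (a g))\<^sup>2) summable_on C" "(\<lambda>g. (cmod (b g))\<^sup>2) summable_on C"
  shows "(\<lambda>g. a g * cnj (b g)) abs_summable_on C"
proof -
  have "(\<lambda>g. (cmod (a g))\<^sup>2 + (cmod (b g))\<^sup>2) abs_summable_on C"
    by (rule summable_on_iff_abs_summable_on_real[THEN iffD1, OF summable_on_add[OF assms]])
  moreover have "norm (a g * cnj (b g)) \<le> norm ((cmod (a g))\<^sup>2 + (cmod (b g))\<^sup>2)" for g
    using norm_mult_cnj_le_sum_squares[of "a g" "b g"]
    by (metis real_norm_def abs_of_nonneg add_nonneg_nonneg zero_le_power2)
  ultimately show ?thesis by (rule abs_summable_on_comparison_test)
qed

lemma norm_infsum_mult_cnj_le:
  fixes a b :: "'a \<Rightarrow> complex"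
  assumes "(\<lambda>g. (cmod (a g))\<^sup>2) summable_on C" "(\<lambda>g. (cmod (b g))\<^sup>2) summable_on C"
  shows "cmod (infsum (\<lambda>g. a g * cnj (b g)) C) \<le>
           infsum (\<lambda>g. (cmod (a g))\<^sup>2) C + infsum (\<lambda>g. (cmod (b g))\<^sup>2) C"
proof -
  have "cmod (infsum (\<lambda>g. a g * cnj (b g)) C) \<le> infsum (\<lambda>g. norm (a g * cnj (b g))) C"
    by (rule norm_infsum_bound[OF abs_summable_on_mult_cnj[OF assms]])
  also have "\<dots> \<le> infsum (\<lambda>g. (cmod (a g))\<^sup>2 + (cmod (b g))\<^sup>2) C"
    by (rule infsum_mono[OF abs_summable_on_mult_cnj[OF assms] summable_on_add[OF assms]])
       (rule norm_mult_cnj_le_sum_squares)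
  also have "\<dots> = infsum (\<lambda>g. (cmod (a g))\<^sup>2) C + infsum (\<lambda>g. (cmod (b g))\<^sup>2) C"
    by (rule infsum_add[OF assms])
  finally show ?thesis .
qed

lemma Inf_ratio_bounds_attained:
  fixes R N :: "'x \<Rightarrow> real" and L :: "'x set"
  defines "U \<equiv> {s. \<forall>\<xi>\<in>L. R \<xi> \<le> s * N \<xi>}"
  assumes "s \<in> U" "e \<in> L" "0 < N e"
  shows "Inf U \<in> U" and "Inf U \<le> s"
proof -
  have "U = (\<Inter>\<xi>\<in>L. {s. R \<xi> \<le> s * N \<xi>})" by (auto simp: U_def)
  moreover have "closed {s. R \<xi> \<le> s * N \<xi>}" for \<xi>
    by (intro closed_Collect_le continuous_intros)
  ultimately have closed: "closed U" by auto
  have bdd: "bdd_below U"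
  proof
    fix s assume "s \<in> U"
    then have "R e \<le> s * N e" using assms(3) by (auto simp: U_def)
    then show "R e / N e \<le> s" using assms(4) by (simp add: pos_divide_le_eq)
  qed
  have "U \<noteq> {}" using assms(2) by auto
  then show "Inf U \<in> U"
    using bdd closed by (rule closed_contains_Inf)
  show "Inf U \<le> s"
    using cInf_lower[OF assms(2) bdd] .
qed

definition l2_sqnorm :: "('a, 'b) monoid_scheme \<Rightarrow> ('a \<Rightarrow> complex) \<Rightarrow> real" where
  "l2_sqnorm G \<xi> = infsum (\<lambda>g. (cmod (\<xi> g))\<^sup>2) (carrier G)"

definition lreg_coeff :: "('a, 'b) monoid_scheme \<Rightarrow> ('a \<Rightarrow> complex) \<Rightarrow> ('a \<Rightarrow> complex) \<Rightarrow> 'a \<Rightarrow> complex"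
  where "lreg_coeff G \<xi> \<eta> h = infsum (\<lambda>g. \<xi> (inv\<^bsub>G\<^esub> h \<otimes>\<^bsub>G\<^esub> g) * cnj (\<eta> g)) (carrier G)"

definition qform :: "('a, 'b) monoid_scheme \<Rightarrow> ('a \<Rightarrow> complex) \<Rightarrow> ('a \<Rightarrow> complex) \<Rightarrow> complex" where
  "qform G f \<xi> = l2_inner G (lreg G f \<xi>) \<xi>"

lemma nonneg_c_iff_nonneg: "nonneg_c z \<longleftrightarrow> 0 \<le> z"
  by (auto simp: nonneg_c_def less_eq_complex_def)

lemma pos_elem_iff_qform:
  "pos_elem G f \<longleftrightarrow> (\<forall>\<xi>\<in>l2 G. Im (qform G f \<xi>) = 0 \<and> 0 \<le> Re (qform G f \<xi>))"
  by (simp add: pos_elem_def qform_def nonneg_c_def)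

lemma l2_sqnorm_nonneg: "0 \<le> l2_sqnorm G \<xi>"
  unfolding l2_sqnorm_def by (rule infsum_nonneg) simp

lemma l2_sqnorm_summable: "\<xi> \<in> l2 G \<Longrightarrow> (\<lambda>g. (cmod (\<xi> g))\<^sup>2) summable_on carrier G"
  by (simp add: l2_def)

lemma l2_inner_self:
  assumes "\<xi> \<in> l2 G"
  shows "l2_inner G \<xi> \<xi> = of_real (l2_sqnorm G \<xi>)"
proof -
  have "l2_inner G \<xi> \<xi> = infsum (\<lambda>g. of_real ((cmod (\<xi> g))\<^sup>2)) (carrier G)"
    unfolding l2_inner_def by (rule infsum_cong) (simp add: complex_norm_square[symmetric])
  also have "\<dots> = of_real (l2_sqnorm G \<xi>)"
    unfolding l2_sqnorm_def
    using has_sum_of_real[OF has_sum_infsum[OF l2_sqnorm_summable[OF assms]]] infsumI by blast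
  finally show ?thesis .
qed

lemma fin_supp_imp_l2:
  assumes "fin_supp G \<xi>"
  shows "\<xi> \<in> l2 G"
proof -
  have "(\<lambda>g. (cmod (\<xi> g))\<^sup>2) summable_on carrier G \<longleftrightarrow>
        (\<lambda>g. (cmod (\<xi> g))\<^sup>2) summable_on {g. \<xi> g \<noteq> 0}"
    by (rule summable_on_cong_neutral) (use assms in \<open>auto simp: fin_supp_def\<close>)
  then show ?thesis using assms by (simp add: l2_def fin_supp_def)
qed

lemma fin_supp_lincomb:
  assumes "fin_supp G f" "fin_supp G f'"
  shows "fin_supp G (\<lambda>g. a * f g + b * f' g)"
proof -
  have "{g. a * f g + b * f' g \<noteq> 0} \<subseteq> {g. f g \<noteq> 0} \<union> {g. f' g \<noteq> 0}" by auto
  moreover have "finite ({g. f g \<noteq> 0} \<union> {g. f' g \<noteq> 0})"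
    using assms by (simp add: fin_supp_def)
  ultimately have "finite {g. a * f g + b * f' g \<noteq> 0}" by (rule finite_subset)
  then show ?thesis using assms by (simp add: fin_supp_def)
qed

lemma (in group) fin_supp_scaled_unit_el: "fin_supp G (\<lambda>g. c * unit_el G g)"
proof -
  have "{g. c * unit_el G g \<noteq> 0} \<subseteq> {\<one>}" by (auto simp: unit_el_def)
  then show ?thesis by (auto simp: fin_supp_def unit_el_def intro: finite_subset)
qed

lemma (in group) fin_supp_unit_el: "fin_supp G (unit_el G)"
  using fin_supp_scaled_unit_el[of 1] by simp

lemma XS_fin_supp: "x \<in> XS G S \<Longrightarrow> fin_supp G x"
  by (simp add: XS_def)

context group begin

lemma bij_betw_inv_mult_left: "h \<in> carrier G \<Longrightarrow> bij_betw (\<lambda>g. inv h \<otimes> g) (carrier G) (carrier G)"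
  by (rule bij_betw_byWitness[where f' = "\<lambda>g. h \<otimes> g"]) (auto simp: m_assoc[symmetric])

lemma l2_translate:
  assumes "\<xi> \<in> l2 G" "h \<in> carrier G"
  shows "(\<lambda>g. (cmod (\<xi> (inv h \<otimes> g)))\<^sup>2) summable_on carrier G"
    and "infsum (\<lambda>g. (cmod (\<xi> (inv h \<otimes> g)))\<^sup>2) (carrier G) = l2_sqnorm G \<xi>"
  using summable_on_reindex_bij_betw[OF bij_betw_inv_mult_left[OF assms(2)],
      of "\<lambda>g. (cmod (\<xi> g))\<^sup>2"]
    infsum_reindex_bij_betw[OF bij_betw_inv_mult_left[OF assms(2)], of "\<lambda>g. (cmod (\<xi> g))\<^sup>2"]
    l2_sqnorm_summable[OF assms(1)]
  by (simp_all add: l2_sqnorm_def)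

lemma lreg_coeff_summable:
  "\<xi> \<in> l2 G \<Longrightarrow> \<eta> \<in> l2 G \<Longrightarrow> h \<in> carrier G \<Longrightarrow>
     (\<lambda>g. \<xi> (inv h \<otimes> g) * cnj (\<eta> g)) summable_on carrier G"
  by (rule abs_summable_summable[OF abs_summable_on_mult_cnj[OF l2_translate(1) l2_sqnorm_summable]])

lemma norm_lreg_coeff_le:
  "\<xi> \<in> l2 G \<Longrightarrow> \<eta> \<in> l2 G \<Longrightarrow> h \<in> carrier G \<Longrightarrow>
     cmod (lreg_coeff G \<xi> \<eta> h) \<le> l2_sqnorm G \<xi> + l2_sqnorm G \<eta>"
  using norm_infsum_mult_cnj_le[OF l2_translate(1) l2_sqnorm_summable, of \<xi> h \<eta>]
  by (simp add: lreg_coeff_def l2_translate(2) l2_sqnorm_def)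

lemma lreg_coeff_one: "lreg_coeff G \<xi> \<eta> \<one> = l2_inner G \<xi> \<eta>"
  unfolding lreg_coeff_def l2_inner_def by (rule infsum_cong) simp

lemma lreg_coeff_unit_el:
  assumes "h \<in> carrier G"
  shows "lreg_coeff G (\<lambda>g. c * unit_el G g) (\<lambda>g. d * unit_el G g) h = (if h = \<one> then c * cnj d else 0)"
proof -
  have "lreg_coeff G (\<lambda>g. c * unit_el G g) (\<lambda>g. d * unit_el G g) h =
     infsum (\<lambda>g. c * unit_el G (inv h \<otimes> g) * cnj (d * unit_el G g)) {\<one>}"
    unfolding lreg_coeff_def by (rule infsum_cong_neutral) (auto simp: unit_el_def)
  then show ?thesis
    using assms by (simp add: unit_el_def)
qed

lemma lreg_eq_sum:
  assumes "finite T" "T \<subseteq> carrier G" "{h. f h \<noteq> 0} \<subseteq> T" "g \<in> carrier G"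
  shows "lreg G f \<xi> g = (\<Sum>h\<in>T. f h * \<xi> (inv h \<otimes> g))"
proof -
  have "lreg G f \<xi> g = (\<Sum>h\<in>{h\<in>carrier G. f h \<noteq> 0}. f h * \<xi> (inv h \<otimes> g))"
    using assms(4) by (simp add: lreg_def)
  also have "\<dots> = (\<Sum>h\<in>T. f h * \<xi> (inv h \<otimes> g))"
    by (rule sum.mono_neutral_left) (use assms in auto)
  finally show ?thesis .
qed

lemma l2_inner_lreg_eq_sum:
  assumes "finite T" "T \<subseteq> carrier G" "{h. f h \<noteq> 0} \<subseteq> T" "\<xi> \<in> l2 G" "\<eta> \<in> l2 G"
  shows "l2_inner G (lreg G f \<xi>) \<eta> = (\<Sum>h\<in>T. f h * lreg_coeff G \<xi> \<eta> h)"
proof -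
  have "l2_inner G (lreg G f \<xi>) \<eta> =
      infsum (\<lambda>g. \<Sum>h\<in>T. f h * (\<xi> (inv h \<otimes> g) * cnj (\<eta> g))) (carrier G)"
    unfolding l2_inner_def
    by (rule infsum_cong) (simp add: lreg_eq_sum[OF assms(1-3)] sum_distrib_right mult.assoc)
  also have "\<dots> = (\<Sum>h\<in>T. infsum (\<lambda>g. f h * (\<xi> (inv h \<otimes> g) * cnj (\<eta> g))) (carrier G))"
  proof (rule infsum_sum[OF assms(1)])
    fix h assume "h \<in> T"
    then have "h \<in> carrier G" using assms(2) by blast
    then show "(\<lambda>g. f h * (\<xi> (inv h \<otimes> g) * cnj (\<eta> g))) summable_on carrier G"
      by (rule summable_on_cmult_right[OF lreg_coeff_summable[OF assms(4,5)]])
  qed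
  also have "\<dots> = (\<Sum>h\<in>T. f h * lreg_coeff G \<xi> \<eta> h)"
    unfolding lreg_coeff_def by (simp add: infsum_cmult_right')
  finally show ?thesis .
qed

lemma qform_lincomb:
  assumes "fin_supp G f" "fin_supp G f'" "\<xi> \<in> l2 G"
  shows "qform G (\<lambda>g. a * f g + b * f' g) \<xi> = a * qform G f \<xi> + b * qform G f' \<xi>"
proof -
  define T where "T = {g. f g \<noteq> 0} \<union> {g. f' g \<noteq> 0}"
  have T: "finite T" "T \<subseteq> carrier G" using assms by (auto simp: T_def fin_supp_def)
  have "qform G (\<lambda>g. a * f g + b * f' g) \<xi> = (\<Sum>h\<in>T. (a * f h + b * f' h) * lreg_coeff G \<xi> \<xi> h)"
    unfolding qform_def by (rule l2_inner_lreg_eq_sum) (use T assms in \<open>auto simp: T_def\<close>)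
  also have "\<dots> = a * (\<Sum>h\<in>T. f h * lreg_coeff G \<xi> \<xi> h) + b * (\<Sum>h\<in>T. f' h * lreg_coeff G \<xi> \<xi> h)"
    by (simp add: distrib_right sum.distrib sum_distrib_left mult.assoc)
  also have "(\<Sum>h\<in>T. f h * lreg_coeff G \<xi> \<xi> h) = qform G f \<xi>"
    unfolding qform_def by (rule l2_inner_lreg_eq_sum[symmetric]) (use T assms in \<open>auto simp: T_def\<close>)
  also have "(\<Sum>h\<in>T. f' h * lreg_coeff G \<xi> \<xi> h) = qform G f' \<xi>"
    unfolding qform_def by (rule l2_inner_lreg_eq_sum[symmetric]) (use T assms in \<open>auto simp: T_def\<close>)
  finally show ?thesis .
qed

lemma qform_unit_el:
  assumes "\<xi> \<in> l2 G"
  shows "qform G (unit_el G) \<xi> = of_real (l2_sqnorm G \<xi>)"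
proof -
  have "qform G (unit_el G) \<xi> = (\<Sum>h\<in>{\<one>}. unit_el G h * lreg_coeff G \<xi> \<xi> h)"
    unfolding qform_def by (rule l2_inner_lreg_eq_sum) (use assms in \<open>auto simp: unit_el_def\<close>)
  then show ?thesis using assms by (simp add: unit_el_def lreg_coeff_one l2_inner_self)
qed

lemma l2_inner_lreg_unit_el:
  assumes "fin_supp G f"
  shows "l2_inner G (lreg G f (\<lambda>g. c * unit_el G g)) (\<lambda>g. d * unit_el G g) = f \<one> * c * cnj d"
proof -
  define T where "T = insert \<one> {g. f g \<noteq> 0}"
  have T: "finite T" "T \<subseteq> carrier G" using assms by (auto simp: T_def fin_supp_def)
  have "l2_inner G (lreg G f (\<lambda>g. c * unit_el G g)) (\<lambda>g. d * unit_el G g)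
      = (\<Sum>h\<in>T. f h * lreg_coeff G (\<lambda>g. c * unit_el G g) (\<lambda>g. d * unit_el G g) h)"
    by (rule l2_inner_lreg_eq_sum)
      (use T in \<open>auto simp: T_def intro: fin_supp_imp_l2 fin_supp_scaled_unit_el\<close>)
  also have "\<dots> = (\<Sum>h\<in>T. if h = \<one> then f h * (c * cnj d) else 0)"
    by (rule sum.cong[OF refl]) (use T in \<open>auto simp: lreg_coeff_unit_el\<close>)
  also have "\<dots> = f \<one> * c * cnj d"
    using T by (simp add: T_def mult.assoc)
  finally show ?thesis .
qed

lemma qform_at_unit_el: "fin_supp G f \<Longrightarrow> qform G f (unit_el G) = f \<one>"
  using l2_inner_lreg_unit_el[of f 1 1] by (simp add: qform_def)

lemma l2_sqnorm_unit_el: "l2_sqnorm G (unit_el G) = 1"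
  using qform_unit_el[OF fin_supp_imp_l2[OF fin_supp_unit_el]] qform_at_unit_el[OF fin_supp_unit_el]
  by (simp add: unit_el_def)

lemma norm_qform_le:
  assumes "fin_supp G f" "\<xi> \<in> l2 G"
  shows "cmod (qform G f \<xi>) \<le> 2 * (\<Sum>h\<in>{g. f g \<noteq> 0}. cmod (f h)) * l2_sqnorm G \<xi>"
proof -
  let ?T = "{g. f g \<noteq> 0}"
  have T: "finite ?T" "?T \<subseteq> carrier G" using assms by (auto simp: fin_supp_def)
  have "cmod (qform G f \<xi>) = cmod (\<Sum>h\<in>?T. f h * lreg_coeff G \<xi> \<xi> h)"
    unfolding qform_def by (subst l2_inner_lreg_eq_sum[OF T]) (use assms in auto)
  also have "\<dots> \<le> (\<Sum>h\<in>?T. cmod (f h * lreg_coeff G \<xi> \<xi> h))"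
    by (rule norm_sum)
  also have "\<dots> \<le> (\<Sum>h\<in>?T. cmod (f h) * (2 * l2_sqnorm G \<xi>))"
  proof (rule sum_mono)
    fix h assume "h \<in> ?T"
    then have "h \<in> carrier G" using T(2) by blast
    then have "cmod (lreg_coeff G \<xi> \<xi> h) \<le> 2 * l2_sqnorm G \<xi>"
      using norm_lreg_coeff_le[OF assms(2,2)] by fastforce
    then show "cmod (f h * lreg_coeff G \<xi> \<xi> h) \<le> cmod (f h) * (2 * l2_sqnorm G \<xi>)"
      by (simp add: norm_mult mult_left_mono)
  qed
  also have "\<dots> = (\<Sum>h\<in>?T. cmod (f h)) * (2 * l2_sqnorm G \<xi>)"
    by (simp only: sum_distrib_right)
  also have "\<dots> = 2 * (\<Sum>h\<in>?T. cmod (f h)) * l2_sqnorm G \<xi>"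
    by (simp only: mult_ac)
  finally show ?thesis .
qed

lemma lreg_coeff_unit_el_plus_delta:
  fixes c :: complex
  assumes "k \<in> carrier G" "k \<noteq> \<one>" "h \<in> carrier G"
  defines "\<xi> \<equiv> \<lambda>g. unit_el G g + c * (if g = k then 1 else 0)"
  shows "lreg_coeff G \<xi> \<xi> h = (if h = \<one> then 1 + c * cnj c else 0) + (if h = inv k then c else 0)
                               + (if h = k then cnj c else 0)"
proof -
  have "lreg_coeff G \<xi> \<xi> h = infsum (\<lambda>g. \<xi> (inv h \<otimes> g) * cnj (\<xi> g)) {\<one>, k}"
    unfolding lreg_coeff_def
    by (rule infsum_cong_neutral) (use assms in \<open>auto simp: unit_el_def\<close>)
  also have "\<dots> = \<xi> (inv h) * cnj (\<xi> \<one>) + \<xi> (inv h \<otimes> k) * cnj (\<xi> k)"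
    using assms by simp
  also have "\<xi> \<one> = 1" using assms by (simp add: unit_el_def)
  also have "\<xi> k = c" using assms by (simp add: unit_el_def)
  also have "\<xi> (inv h) = (if h = \<one> then 1 else 0) + (if h = inv k then c else 0)"
    using assms by (auto simp: unit_el_def)
  also have "\<xi> (inv h \<otimes> k) = (if h = k then 1 else 0) + (if h = \<one> then c else 0)"
  proof -
    have "inv h \<otimes> k = \<one> \<longleftrightarrow> h = k"
      using assms by (metis inv_closed inv_inv l_inv inv_equality)
    moreover have "inv h \<otimes> k = k \<longleftrightarrow> h = \<one>"
      using assms by simp
    ultimately show ?thesis using assms by (auto simp: unit_el_def)
  qed
  finally show ?thesis using assms by (auto simp: algebra_simps)
qed

lemma qform_unit_el_plus_delta:
  fixes c :: complex
  assumes "fin_supp G f" "k \<in> carrier G" "k \<noteq> \<one>"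
  defines "\<xi> \<equiv> \<lambda>g. unit_el G g + c * (if g = k then 1 else 0)"
  shows "\<xi> \<in> l2 G" and "qform G f \<xi> = f \<one> * (1 + c * cnj c) + f (inv k) * c + f k * cnj c"
proof -
  have "{g. \<xi> g \<noteq> 0} \<subseteq> {\<one>, k}" by (auto simp: \<xi>_def unit_el_def)
  then have "finite {g. \<xi> g \<noteq> 0}" by (rule finite_subset) simp
  then show l2: "\<xi> \<in> l2 G"
    using assms(2) by (intro fin_supp_imp_l2) (auto simp: fin_supp_def \<xi>_def unit_el_def)
  define T where "T = {\<one>, k, inv k} \<union> {g. f g \<noteq> 0}"
  have T: "finite T" "T \<subseteq> carrier G" using assms(1,2) by (auto simp: T_def fin_supp_def)
  have "qform G f \<xi> = (\<Sum>h\<in>T. f h * lreg_coeff G \<xi> \<xi> h)"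
    unfolding qform_def by (rule l2_inner_lreg_eq_sum) (use T l2 in \<open>auto simp: T_def\<close>)
  also have "\<dots> = (\<Sum>h\<in>T. (if h = \<one> then f h * (1 + c * cnj c) else 0)
                        + (if h = inv k then f h * c else 0) + (if h = k then f h * cnj c else 0))"
  proof (rule sum.cong[OF refl])
    fix h assume "h \<in> T"
    then have "h \<in> carrier G" using T(2) by blast
    then show "f h * lreg_coeff G \<xi> \<xi> h = (if h = \<one> then f h * (1 + c * cnj c) else 0)
                        + (if h = inv k then f h * c else 0) + (if h = k then f h * cnj c else 0)"
      using lreg_coeff_unit_el_plus_delta[OF assms(2,3), of h c]
      unfolding \<xi>_def[symmetric] by (simp add: distrib_left)
  qed
  also have "\<dots> = f \<one> * (1 + c * cnj c) + f (inv k) * c + f k * cnj c"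
    using T(1) by (simp add: sum.distrib T_def)
  finally show "qform G f \<xi> = f \<one> * (1 + c * cnj c) + f (inv k) * c + f k * cnj c" .
qed

lemma pos_elem_lincomb:
  assumes "fin_supp G f" "fin_supp G f'" "pos_elem G f" "pos_elem G f'" "0 \<le> a" "0 \<le> b"
  shows "pos_elem G (\<lambda>g. of_real a * f g + of_real b * f' g)"
  unfolding pos_elem_iff_qform
proof
  fix \<xi> assume "\<xi> \<in> l2 G"
  then show "Im (qform G (\<lambda>g. of_real a * f g + of_real b * f' g) \<xi>) = 0 \<and>
             0 \<le> Re (qform G (\<lambda>g. of_real a * f g + of_real b * f' g) \<xi>)"
    using assms qform_lincomb[OF assms(1,2) \<open>\<xi> \<in> l2 G\<close>, of "of_real a" "of_real b"]
    by (simp add: pos_elem_iff_qform)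
qed

lemma pos_elem_unit_el: "pos_elem G (unit_el G)"
  by (simp add: pos_elem_iff_qform qform_unit_el l2_sqnorm_nonneg)

lemma pos_elem_trace_nonneg:
  assumes "fin_supp G f" "pos_elem G f"
  shows "Im (f \<one>) = 0" and "0 \<le> Re (f \<one>)"
  using assms(2) fin_supp_imp_l2[OF fin_supp_unit_el] qform_at_unit_el[OF assms(1)]
  by (auto simp: pos_elem_iff_qform)

lemma pos_elem_self_adj:
  assumes "fin_supp G f" "pos_elem G f"
  shows "self_adj G f"
  unfolding self_adj_def
proof
  fix k assume k: "k \<in> carrier G"
  show "f (inv k) = cnj (f k)"
  proof (cases "k = \<one>")
    case True
    then show ?thesis using pos_elem_trace_nonneg[OF assms] by (simp add: complex_eq_iff)
  next
    case False
    have "Im (f \<one> * (1 + c * cnj c) + f (inv k) * c + f k * cnj c) = 0" for c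
    proof -
      note test = qform_unit_el_plus_delta[OF assms(1) k False, of c]
      have "Im (qform G f (\<lambda>g. unit_el G g + c * (if g = k then 1 else 0))) = 0"
        using assms(2) test(1) by (simp add: pos_elem_iff_qform)
      then show ?thesis by (simp only: test(2))
    qed
    from this[of 1] this[of \<i>] show ?thesis
      using pos_elem_trace_nonneg(1)[OF assms] by (simp add: complex_eq_iff)
  qed
qed

lemma self_adj_minus_trace:
  assumes "self_adj G f"
  shows "self_adj G (\<lambda>g. f g - f \<one> * unit_el G g)"
proof -
  have "f \<one> = cnj (f \<one>)"
    using bspec[OF assms[unfolded self_adj_def] one_closed] by simp
  then show ?thesis using assms by (auto simp: self_adj_def unit_el_def)
qed

lemma pos_elem_trace_zero:
  assumes "fin_supp G f" "pos_elem G f" "f \<one> = 0"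
  shows "f g = 0"
proof (cases "g \<in> carrier G \<and> g \<noteq> \<one>")
  case True
  have "f (inv g) = cnj (f g)"
    using pos_elem_self_adj[OF assms(1,2)] True by (simp add: self_adj_def)
  then have "qform G f (\<lambda>h. unit_el G h + - f g * (if h = g then 1 else 0)) = - 2 * (cmod (f g))\<^sup>2"
    using qform_unit_el_plus_delta(2)[OF assms(1), of g "- f g"] True assms(3)
    by (simp add: complex_norm_square[symmetric] mult.commute)
  moreover have "0 \<le> Re (qform G f (\<lambda>h. unit_el G h + - f g * (if h = g then 1 else 0)))"
    using assms(2) qform_unit_el_plus_delta(1)[OF assms(1), of g "- f g"] True
    by (simp add: pos_elem_iff_qform)
  ultimately show ?thesis by simp
next
  case False
  then show ?thesis using assms(1,3) by (auto simp: fin_supp_def)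
qed

lemma pos_elem_scalar_minus_iff:
  assumes "fin_supp G f"
  shows "pos_elem G (\<lambda>g. of_real s * unit_el G g - f g) \<longleftrightarrow>
    (\<forall>\<xi>\<in>l2 G. Im (qform G f \<xi>) = 0 \<and> Re (qform G f \<xi>) \<le> s * l2_sqnorm G \<xi>)"
proof -
  have "qform G (\<lambda>g. of_real s * unit_el G g - f g) \<xi> = of_real (s * l2_sqnorm G \<xi>) - qform G f \<xi>"
    if "\<xi> \<in> l2 G" for \<xi>
    using qform_lincomb[OF fin_supp_unit_el assms that, of "of_real s" "- 1"] qform_unit_el[OF that]
    by simp
  then show ?thesis by (auto simp: pos_elem_iff_qform)
qed

lemma pos_elem_bounded_above:
  assumes "fin_supp G f" "pos_elem G f"
  shows "\<exists>s. pos_elem G (\<lambda>g. of_real s * unit_el G g - f g)"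
proof -
  define K where "K = 2 * (\<Sum>h\<in>{g. f g \<noteq> 0}. cmod (f h))"
  have "Re (qform G f \<xi>) \<le> K * l2_sqnorm G \<xi>" if "\<xi> \<in> l2 G" for \<xi>
    using complex_Re_le_cmod[of "qform G f \<xi>"] norm_qform_le[OF assms(1) that] by (simp add: K_def)
  then have "pos_elem G (\<lambda>g. of_real K * unit_el G g - f g)"
    unfolding pos_elem_scalar_minus_iff[OF assms(1)]
    using assms(2) by (simp add: pos_elem_iff_qform)
  then show ?thesis ..
qed

lemma pos_elem_upper_const:
  assumes "fin_supp G f" "pos_elem G (\<lambda>g. of_real s * unit_el G g - f g)"
  shows "pos_elem G (\<lambda>g. of_real (upper_const G f) * unit_el G g - f g)"
    and "upper_const G f \<le> s"
proof -
  let ?U = "{t. \<forall>\<xi>\<in>l2 G. Re (qform G f \<xi>) \<le> t * l2_sqnorm G \<xi>}"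
  have Im: "\<forall>\<xi>\<in>l2 G. Im (qform G f \<xi>) = 0"
    using assms(2) by (simp add: pos_elem_scalar_minus_iff[OF assms(1)])
  then have U: "upper_const G f = Inf ?U"
    unfolding upper_const_def by (simp add: pos_elem_scalar_minus_iff[OF assms(1)])
  have "s \<in> ?U" using assms(2) by (simp add: pos_elem_scalar_minus_iff[OF assms(1)])
  from Inf_ratio_bounds_attained[OF this fin_supp_imp_l2[OF fin_supp_unit_el]]
  have "Inf ?U \<in> ?U" "Inf ?U \<le> s" by (simp_all add: l2_sqnorm_unit_el)
  then show "pos_elem G (\<lambda>g. of_real (upper_const G f) * unit_el G g - f g)" "upper_const G f \<le> s"
    using Im by (simp_all add: U pos_elem_scalar_minus_iff[OF assms(1)])
qed

lemma pos_elem_lower_const: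
  assumes "fin_supp G f" "pos_elem G (\<lambda>g. of_real s * unit_el G g + f g)"
  shows "pos_elem G (\<lambda>g. of_real (lower_const G f) * unit_el G g + f g)"
    and "lower_const G f \<le> s"
proof -
  have "fin_supp G (\<lambda>g. - f g)"
    using fin_supp_lincomb[OF assms(1,1), of "- 1" 0] by simp
  from pos_elem_upper_const[OF this, of s] assms(2)
  show "pos_elem G (\<lambda>g. of_real (lower_const G f) * unit_el G g + f g)" "lower_const G f \<le> s"
    by (simp_all add: lower_const_def upper_const_def)
qed

lemma pos_elem_rho_bound:
  assumes x0: "fin_supp G x0" "x0 \<one> = 0" "\<exists>g. x0 g \<noteq> 0"
    and pos: "pos_elem G (\<lambda>g. of_real t * unit_el G g + x0 g)"
    and rho: "rho_el G x0 \<le> r" and r: "0 \<le> r"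
  shows "pos_elem G (\<lambda>g. of_real (r * t) * unit_el G g - x0 g)"
proof -
  define a b where "a = upper_const G x0" and "b = lower_const G x0"
  have fin: "fin_supp G (\<lambda>g. of_real s * unit_el G g + c * x0 g)" for s c
    using fin_supp_lincomb[OF fin_supp_unit_el x0(1)] .
  from pos_elem_lower_const[OF x0(1) pos]
  have pos_b: "pos_elem G (\<lambda>g. of_real b * unit_el G g + x0 g)" and "b \<le> t"
    unfolding b_def by blast+
  obtain s where "pos_elem G (\<lambda>g. of_real s * unit_el G g - (of_real t * unit_el G g + x0 g))"
    using pos_elem_bounded_above[OF _ pos] fin[of t 1] by auto
  then have "pos_elem G (\<lambda>g. of_real (s - t) * unit_el G g - x0 g)"
    by (simp add: algebra_simps)
  then have pos_a: "pos_elem G (\<lambda>g. of_real a * unit_el G g - x0 g)"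
    unfolding a_def by (rule pos_elem_upper_const[OF x0(1)])
  have "0 \<le> b"
    using pos_elem_trace_nonneg(2)[OF _ pos_b] fin[of b 1] x0(2) by (simp add: unit_el_def)
  moreover have "b \<noteq> 0"
  proof
    assume "b = 0"
    then have "pos_elem G x0" using pos_b by simp
    then have "x0 g = 0" for g using pos_elem_trace_zero[OF x0(1) _ x0(2)] by blast
    with x0(3) show False by blast
  qed
  ultimately have "0 < b" by simp
  then have "a \<le> r * b"
    using rho by (simp add: rho_el_def a_def b_def divide_le_eq)
  also have "\<dots> \<le> r * t" using \<open>b \<le> t\<close> r by (rule mult_left_mono)
  finally have "0 \<le> r * t - a" by simp
  from pos_elem_lincomb[OF fin_supp_unit_el _ pos_elem_unit_el pos_a this zero_le_one] fin[of a "- 1"]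
  have "pos_elem G (\<lambda>g. of_real (r * t - a) * unit_el G g + of_real 1 * (of_real a * unit_el G g - x0 g))"
    by simp
  moreover have "(\<lambda>g. of_real (r * t - a) * unit_el G g + of_real 1 * (of_real a * unit_el G g - x0 g))
      = (\<lambda>g. of_real (r * t) * unit_el G g - x0 g)"
    by (simp add: algebra_simps)
  ultimately show ?thesis by simp
qed

lemma pos_elem_scaled_trace_minus:
  assumes x: "fin_supp G x" "pos_elem G x" and r: "0 \<le> r"
    and rho: "\<exists>g. x g \<noteq> x \<one> * unit_el G g \<Longrightarrow> rho_el G (\<lambda>g. x g - x \<one> * unit_el G g) \<le> r"
  shows "pos_elem G (\<lambda>g. of_real (1 + r) * x \<one> * unit_el G g - x g)"
proof -
  define t where "t = Re (x \<one>)"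
  have xt: "x \<one> = of_real t" and t: "0 \<le> t"
    using pos_elem_trace_nonneg[OF x] by (simp_all add: t_def complex_eq_iff)
  define x0 where "x0 = (\<lambda>g. x g - of_real t * unit_el G g)"
  have x0: "fin_supp G x0" "x0 \<one> = 0"
    using fin_supp_lincomb[OF x(1) fin_supp_unit_el, of 1 "- of_real t"]
    by (simp_all add: x0_def xt unit_el_def)
  have "pos_elem G (\<lambda>g. of_real (r * t) * unit_el G g - x0 g)"
  proof (cases "\<forall>g. x0 g = 0")
    case True
    then show ?thesis
      using pos_elem_lincomb[OF fin_supp_unit_el fin_supp_unit_el pos_elem_unit_el pos_elem_unit_el,
          of "r * t" 0] r t by simp
  next
    case False
    then have "rho_el G x0 \<le> r" using rho by (simp add: x0_def xt)
    moreover have "pos_elem G (\<lambda>g. of_real t * unit_el G g + x0 g)" using x(2) by (simp add: x0_def)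
    ultimately show ?thesis using pos_elem_rho_bound[OF x0] False r by blast
  qed
  moreover have "(\<lambda>g. of_real (r * t) * unit_el G g - x0 g) = (\<lambda>g. of_real (1 + r) * x \<one> * unit_el G g - x g)"
    by (simp add: x0_def xt algebra_simps)
  ultimately show ?thesis by simp
qed

lemma l2_inner_lreg_scaled_unit_el:
  assumes "\<xi> \<in> l2 G" "\<eta> \<in> l2 G"
  shows "l2_inner G (lreg G (\<lambda>g. c * unit_el G g) \<xi>) \<eta> = c * l2_inner G \<xi> \<eta>"
proof -
  have "l2_inner G (lreg G (\<lambda>g. c * unit_el G g) \<xi>) \<eta> = (\<Sum>h\<in>{\<one>}. c * unit_el G h * lreg_coeff G \<xi> \<eta> h)"
    by (rule l2_inner_lreg_eq_sum) (use assms in \<open>auto simp: unit_el_def\<close>)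
  then show ?thesis by (simp add: unit_el_def lreg_coeff_one)
qed

lemma pos_mat_trace_psd:
  assumes "\<forall>i<n. \<forall>j<n. fin_supp G (F i j)" "pos_mat G n F"
  shows "0 \<le> (\<Sum>i<n. \<Sum>j<n. F i j \<one> * (v j * cnj (v i)))"
proof -
  have "\<forall>i<n. (\<lambda>g. v i * unit_el G g) \<in> l2 G"
    using fin_supp_imp_l2[OF fin_supp_scaled_unit_el] by blast
  then have "nonneg_c (\<Sum>i<n. \<Sum>j<n. l2_inner G (lreg G (F i j) (\<lambda>g. v j * unit_el G g)) (\<lambda>g. v i * unit_el G g))"
    using spec[OF assms(2)[unfolded pos_mat_def], of "\<lambda>i g. v i * unit_el G g"] by simp
  also have "(\<Sum>i<n. \<Sum>j<n. l2_inner G (lreg G (F i j) (\<lambda>g. v j * unit_el G g)) (\<lambda>g. v i * unit_el G g))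
      = (\<Sum>i<n. \<Sum>j<n. F i j \<one> * (v j * cnj (v i)))"
  proof (intro sum.cong refl)
    fix i j assume "i \<in> {..<n}" "j \<in> {..<n}"
    then have "fin_supp G (F i j)" using assms(1) by simp
    then show "l2_inner G (lreg G (F i j) (\<lambda>g. v j * unit_el G g)) (\<lambda>g. v i * unit_el G g)
        = F i j \<one> * (v j * cnj (v i))"
      by (simp add: l2_inner_lreg_unit_el mult.assoc)
  qed
  finally show ?thesis by (simp only: nonneg_c_iff_nonneg)
qed

lemma pos_mat_scalar:
  assumes "\<And>v. 0 \<le> (\<Sum>i<n. \<Sum>j<n. M i j * (v j * cnj (v i)))"
  shows "pos_mat G n (\<lambda>i j g. M i j * unit_el G g)"
  unfolding pos_mat_def
proof (intro allI impI)
  fix \<xi> :: "nat \<Rightarrow> 'a \<Rightarrow> complex" assume \<xi>: "\<forall>i<n. \<xi> i \<in> l2 G"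
  define w where "w = (\<lambda>i j g. M i j * (\<xi> j g * cnj (\<xi> i g)))"
  have w: "w i j summable_on carrier G" if "i < n" "j < n" for i j
  proof -
    have "(\<lambda>g. \<xi> j g * cnj (\<xi> i g)) abs_summable_on carrier G"
      using that \<xi> by (intro abs_summable_on_mult_cnj l2_sqnorm_summable) auto
    then show ?thesis
      unfolding w_def by (rule summable_on_cmult_right[OF abs_summable_summable])
  qed
  have row_summable: "(\<lambda>g. \<Sum>j<n. w i j g) summable_on carrier G" if "i < n" for i
    by (rule summable_on_sum) (use that w in auto)
  have row_infsum: "infsum (\<lambda>g. \<Sum>j<n. w i j g) (carrier G) = (\<Sum>j<n. infsum (w i j) (carrier G))"
    if "i < n" for i
    by (rule infsum_sum) (use that w in auto)
  have "(\<Sum>i<n. \<Sum>j<n. l2_inner G (lreg G (\<lambda>g. M i j * unit_el G g) (\<xi> j)) (\<xi> i))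
      = (\<Sum>i<n. \<Sum>j<n. infsum (w i j) (carrier G))"
  proof (intro sum.cong refl)
    fix i j assume "i \<in> {..<n}" "j \<in> {..<n}"
    then have "\<xi> j \<in> l2 G" "\<xi> i \<in> l2 G" using \<xi> by auto
    then show "l2_inner G (lreg G (\<lambda>g. M i j * unit_el G g) (\<xi> j)) (\<xi> i) = infsum (w i j) (carrier G)"
      unfolding l2_inner_lreg_scaled_unit_el[OF \<open>\<xi> j \<in> l2 G\<close> \<open>\<xi> i \<in> l2 G\<close>]
      by (simp add: l2_inner_def w_def infsum_cmult_right')
  qed
  also have "\<dots> = (\<Sum>i<n. infsum (\<lambda>g. \<Sum>j<n. w i j g) (carrier G))"
    using row_infsum by simp
  also have "\<dots> = infsum (\<lambda>g. \<Sum>i<n. \<Sum>j<n. w i j g) (carrier G)"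
    by (rule infsum_sum[symmetric]) (use row_summable in auto)
  finally have sum_eq: "(\<Sum>i<n. \<Sum>j<n. l2_inner G (lreg G (\<lambda>g. M i j * unit_el G g) (\<xi> j)) (\<xi> i))
      = infsum (\<lambda>g. \<Sum>i<n. \<Sum>j<n. w i j g) (carrier G)" .
  have "0 \<le> infsum (\<lambda>g. \<Sum>i<n. \<Sum>j<n. w i j g) (carrier G)"
  proof (rule infsum_nonneg_complex)
    show "(\<lambda>g. \<Sum>i<n. \<Sum>j<n. w i j g) summable_on carrier G"
      by (rule summable_on_sum) (use row_summable in auto)
  qed (simp add: w_def assms)
  then show "nonneg_c (\<Sum>i<n. \<Sum>j<n. l2_inner G (lreg G (\<lambda>g. M i j * unit_el G g) (\<xi> j)) (\<xi> i))"
    by (simp only: sum_eq nonneg_c_iff_nonneg)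
qed

lemma scaled_unit_el_in_XS: "(\<lambda>g. c * unit_el G g) \<in> XS G S"
  using fin_supp_scaled_unit_el by (auto simp: XS_def unit_el_def)

lemma XS_lincomb:
  assumes "x \<in> XS G S" "y \<in> XS G S"
  shows "(\<lambda>g. a * x g + b * y g) \<in> XS G S"
proof -
  have "fin_supp G (\<lambda>g. a * x g + b * y g)"
    using assms by (intro fin_supp_lincomb) (simp_all add: XS_def)
  moreover have "g \<in> S \<union> {\<one>}" if "a * x g + b * y g \<noteq> 0" for g
  proof (rule ccontr)
    assume "g \<notin> S \<union> {\<one>}"
    then have "x g = 0" "y g = 0" using assms by (auto simp: XS_def)
    with that show False by simp
  qed
  ultimately show ?thesis by (simp add: XS_def)
qed

lemma cp_map_scaled_trace:
  assumes "0 \<le> c"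
  shows "cp_map G (XS G S) (\<lambda>x g. of_real c * x \<one> * unit_el G g)"
  unfolding cp_map_def
proof (intro conjI ballI allI impI)
  show "(\<lambda>x g. of_real c * x \<one> * unit_el G g) ` XS G S \<subseteq> XS G S"
    using scaled_unit_el_in_XS by auto
next
  fix n F assume "\<forall>i<n. \<forall>j<n. F i j \<in> XS G S" "pos_mat G n F"
  then have "0 \<le> (\<Sum>i<n. \<Sum>j<n. F i j \<one> * (v j * cnj (v i)))" for v
    by (intro pos_mat_trace_psd) (auto intro: XS_fin_supp)
  moreover have "(0::complex) \<le> of_real c" using assms by (simp add: less_eq_complex_def)
  ultimately have "0 \<le> of_real c * (\<Sum>i<n. \<Sum>j<n. F i j \<one> * (v j * cnj (v i)))" for v
    by (simp add: mult_nonneg_nonneg)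
  then have "0 \<le> (\<Sum>i<n. \<Sum>j<n. of_real c * F i j \<one> * (v j * cnj (v i)))" for v
    by (simp add: sum_distrib_left mult.assoc)
  then show "pos_mat G n (\<lambda>i j g. of_real c * F i j \<one> * unit_el G g)"
    by (rule pos_mat_scalar)
qed (simp add: algebra_simps)

lemma rho_el_le_rho_S:
  assumes "f \<in> XS G S" "self_adj G f" "\<exists>g. f g \<noteq> 0" "f \<one> = 0"
  shows "ereal (rho_el G f) \<le> rho_S G S"
  unfolding rho_S_def by (rule Sup_upper) (use assms in blast)

lemma pos_elem_scaled_trace_minus_XS:
  assumes "x \<in> XS G S" "pos_elem G x" "rho_S G S = ereal r" "0 \<le> r"
  shows "pos_elem G (\<lambda>g. of_real (1 + r) * x \<one> * unit_el G g - x g)"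
proof (rule pos_elem_scaled_trace_minus[OF XS_fin_supp[OF assms(1)] assms(2,4)])
  let ?x0 = "\<lambda>g. x g - x \<one> * unit_el G g"
  have "?x0 \<in> XS G S"
    using XS_lincomb[OF assms(1) scaled_unit_el_in_XS, of 1 "- x \<one>" 1] by simp
  moreover have "self_adj G ?x0"
    using self_adj_minus_trace[OF pos_elem_self_adj[OF XS_fin_supp[OF assms(1)] assms(2)]] .
  ultimately show "\<exists>g. x g \<noteq> x \<one> * unit_el G g \<Longrightarrow> rho_el G ?x0 \<le> r"
    using rho_el_le_rho_S[of ?x0 S] assms(3) by (simp add: unit_el_def)
qed

lemma op_norm_scaled_unit_el_le:
  assumes "0 \<le> c"
  shows "op_norm G (\<lambda>g. of_real c * unit_el G g) \<le> c"
  unfolding op_norm_def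
proof (rule cSup_least)
  have "(\<lambda>_. 0) \<in> l2 G" "l2_norm G (\<lambda>_. 0) \<le> 1" by (simp_all add: l2_def l2_norm_def)
  then show "{l2_norm G (lreg G (\<lambda>g. of_real c * unit_el G g) \<xi>) | \<xi>. \<xi> \<in> l2 G \<and> l2_norm G \<xi> \<le> 1} \<noteq> {}"
    by blast
next
  fix y assume "y \<in> {l2_norm G (lreg G (\<lambda>g. of_real c * unit_el G g) \<xi>) | \<xi>. \<xi> \<in> l2 G \<and> l2_norm G \<xi> \<le> 1}"
  then obtain \<xi> where y: "y = l2_norm G (lreg G (\<lambda>g. of_real c * unit_el G g) \<xi>)"
    and \<xi>: "\<xi> \<in> l2 G" "l2_norm G \<xi> \<le> 1" by blast
  have "lreg G (\<lambda>g. of_real c * unit_el G g) \<xi> g = of_real c * \<xi> g" for g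
  proof (cases "g \<in> carrier G")
    case True
    have "lreg G (\<lambda>g. of_real c * unit_el G g) \<xi> g = (\<Sum>h\<in>{\<one>}. of_real c * unit_el G h * \<xi> (inv h \<otimes> g))"
      by (rule lreg_eq_sum) (use True in \<open>auto simp: unit_el_def\<close>)
    then show ?thesis using True by (simp add: unit_el_def)
  next
    case False
    then show ?thesis using \<xi>(1) by (simp add: lreg_def l2_def)
  qed
  then have "y = sqrt (c\<^sup>2 * infsum (\<lambda>g. (cmod (\<xi> g))\<^sup>2) (carrier G))"
    using assms by (simp add: y l2_norm_def norm_mult power_mult_distrib infsum_cmult_right')
  also have "\<dots> = c * l2_norm G \<xi>"
    using assms by (simp add: l2_norm_def real_sqrt_mult)
  also have "\<dots> \<le> c" using \<xi>(2) assms by (simp add: mult_left_le)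
  finally show "y \<le> c" .
qed

end

theorem proposition4p9:
  fixes G :: "('a, 'b) monoid_scheme" and S :: "'a set"
  assumes "group G"
    and "countable (carrier G)"
    and "S \<subseteq> carrier G"
    and "finite S"
    and "\<forall>s\<in>S. inv\<^bsub>G\<^esub> s \<in> S"
    and "generate G S = carrier G"
  shows "Ind G (XS G S) (scalars G) \<le> 1 + rho_S G S"
proof -
  interpret group G by fact
  have "0 \<le> rho_S G S" unfolding rho_S_def by (rule Sup_upper) simp
  then consider "rho_S G S = \<infinity>" | r where "rho_S G S = ereal r" "0 \<le> r"
    by (cases "rho_S G S") auto
  then show ?thesis
  proof cases
    case 2
    define \<phi> where "\<phi> = (\<lambda>x g. of_real (1 + r) * x \<one>\<^bsub>G\<^esub> * unit_el G g)"
    have "\<phi> \<in> CP1 G (XS G S)" "\<phi> ` XS G S \<subseteq> scalars G"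
      using cp_map_scaled_trace[of "1 + r" S] 2 by (auto simp: CP1_def scalars_def \<phi>_def)
    moreover have "pos_elem G (\<lambda>g. \<phi> x g - x g)" if "x \<in> XS G S" "pos_elem G x" for x
      unfolding \<phi>_def using pos_elem_scaled_trace_minus_XS[OF that 2] .
    ultimately have "Ind G (XS G S) (scalars G) \<le> ereal (op_norm G (\<phi> (unit_el G)))"
      unfolding Ind_def by (intro Inf_lower) blast
    also have "\<dots> \<le> ereal (1 + r)"
      using op_norm_scaled_unit_el_le[of "1 + r"] 2 by (simp add: \<phi>_def unit_el_def)
    also have "\<dots> = 1 + rho_S G S" using 2 by simp
    finally show ?thesis .
  qed simp
qed

end
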